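(* Let $(\mathcal X,\mathcal B,\pi)$ be a measure space with $\pi$ $\sigma$-finite, $r:\mathcal X\to\mathbb R$ measurable, and the noise stationary: $\{\varepsilon(x)\}$ a real-valued random field with $\varepsilon(x)\overset d=\varepsilon$ for all $x$ for some random variable $\varepsilon$, with i.i.d. copies independent of sampled points. Let $2\le K<\infty$, $\alpha\in\bigl(\frac{K-1}{K},1\bigr)$, $\rho:=(1-\alpha)K$, and $p_0,p_{\rm ref}\in\mathcal P_\pi$ with $\int p|\log p|\,d\pi<\infty$ for $p\in\{p_0,p_{\rm ref}\}$. Then for every $\eta>0$, $$\sup_{\|\Delta r\|_\infty\le\eta}\ \sup_{n\in\mathbb N\cup\{\infty\}}d_{\rm TV}\bigl(T^n_{\Delta r}p_0,\,T^n_0p_0\bigr)\le\frac{\eta\rho}{4(1-\rho)}.$$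
   Context: $\mathcal P_\pi$ = probability densities w.r.t. $\pi$. For $\Delta r\in L^\infty(\mathcal X,\mathcal B,\pi)$, the perturbed kernel is $H^K_{p,\Delta r}(x):=\mathbb E\bigl[K e^{r(x)+\Delta r(x)+\varepsilon(x)}/(e^{r(x)+\Delta r(x)+\varepsilon(x)}+\sum_{k=1}^{K-1}e^{r(X_k)+\Delta r(X_k)+\varepsilon_k(X_k)})\bigr]$ with $X_1,\dots,X_{K-1}$ i.i.d. with density $p$ independent of the i.i.d. noise copies $\varepsilon,\varepsilon_1,\dots$. The perturbed update map is $T_{\Delta r}p=\alpha p_{\rm ref}+(1-\alpha)pH^K_{p,\Delta r}$, $T^n_{\Delta r}$ its $n$-fold iterate, and $T^\infty_{\Delta r}p_0:=\lim_{n\to\infty}T^n_{\Delta r}p_0$ (limit in total variation). $d_{\rm TV}(p,q)=\frac12\int|p-q|\,d\pi$. *)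

theory Defs
  imports "HOL-Probability.Probability"
begin

definition is_density :: "'a measure \<Rightarrow> ('a \<Rightarrow> real) \<Rightarrow> bool" where
  "is_density M p \<longleftrightarrow> p \<in> borel_measurable M \<and> (\<forall>x\<in>space M. 0 \<le> p x)
      \<and> integrable M p \<and> (\<integral>x. p x \<partial>M) = 1"

definition d_TV :: "'a measure \<Rightarrow> ('a \<Rightarrow> real) \<Rightarrow> ('a \<Rightarrow> real) \<Rightarrow> real" where
  "d_TV M p q = (1/2) * (\<integral>x. \<bar>p x - q x\<bar> \<partial>M)"

text \<open>N is the law of the stationary noise epsilon.
  The expectation is over epsilon (first component) and K-1 i.i.d. pairs (X_k, epsilon_k(X_k)),
  X_k with density p and epsilon_k(X_k) with law N independent of X_k.\<close>
definition H_kernel :: "nat \<Rightarrow> 'a measure \<Rightarrow> real measure \<Rightarrow> ('a \<Rightarrow> real) \<Rightarrow> ('a \<Rightarrow> real)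
    \<Rightarrow> ('a \<Rightarrow> real) \<Rightarrow> 'a \<Rightarrow> real" where
  "H_kernel K M N r p dr x =
     (\<integral>z. real K * exp (r x + dr x + fst z) /
            (exp (r x + dr x + fst z) +
             (\<Sum>k<K - 1. exp (r (fst (snd z k)) + dr (fst (snd z k)) + snd (snd z k))))
      \<partial>(N \<Otimes>\<^sub>M PiM {..<K - 1} (\<lambda>_. density M (\<lambda>y. ennreal (p y)) \<Otimes>\<^sub>M N)))"

definition T_map :: "nat \<Rightarrow> 'a measure \<Rightarrow> real measure \<Rightarrow> ('a \<Rightarrow> real) \<Rightarrow> real
    \<Rightarrow> ('a \<Rightarrow> real) \<Rightarrow> ('a \<Rightarrow> real) \<Rightarrow> ('a \<Rightarrow> real) \<Rightarrow> ('a \<Rightarrow> real)" where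
  "T_map K M N r \<alpha> p_ref dr p =
     (\<lambda>x. \<alpha> * p_ref x + (1 - \<alpha>) * p x * H_kernel K M N r p dr x)"

end

theory Submission
  imports Defs
begin

text \<open>The density \<open>p H\<^sup>K\<close> of the kernel step (\<open>selected\<close> below) is the law of the point
  chosen by softmax sampling among \<open>K\<close> i.i.d. candidates \<open>(X\<^sub>i, \<epsilon>\<^sub>i)\<close> with \<open>X\<^sub>i \<sim> p\<close>:
  against a bounded test function \<open>\<phi>\<close> it gives \<open>K E[\<phi>(X\<^sub>K) w\<^sub>K] = E[\<Sum>\<^sub>i \<phi>(X\<^sub>i) w\<^sub>i]\<close>
  by exchangeability. Replacing \<open>p\<close> by \<open>q\<close> changes the law of the
  \<open>K\<close> candidates by at most \<open>K \<parallel>p - q\<parallel>\<^sub>1\<close>, so \<open>p \<mapsto> p H\<^sup>K\<close> is \<open>K\<close>-Lipschitz. Perturbing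
  the reward by at most \<open>\<eta>\<close> changes every log-score by at most \<open>\<eta>\<close>, and as the logistic function
  is \<open>1/4\<close>-Lipschitz in the log-odds, the softmax weights move by at most \<open>K \<eta> / 2\<close> in \<open>\<ell>\<^sup>1\<close>.
  Hence the \<open>L\<^sup>1\<close> distance \<open>e\<^sub>n\<close> of the perturbed and the unperturbed chain satisfies
  \<open>e\<^sub>n\<^sub>+\<^sub>1 \<le> \<rho> (\<eta>/2 + e\<^sub>n)\<close> with \<open>\<rho> = (1 - \<alpha>) K < 1\<close>, so \<open>e\<^sub>n \<le> \<rho> \<eta> / (2 (1 - \<rho>))\<close> for
  all \<open>n\<close>, and the bound passes to the limits.\<close>

lemma ln_ge_two_mul_diff_div_add:
  fixes c :: real assumes "1 \<le> c" shows "2 * (c - 1) / (c + 1) \<le> ln c"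
proof -
  let ?h = "\<lambda>c::real. ln c - 2 * (c - 1) / (c + 1)"
  have deriv: "(?h has_real_derivative (1/t - 4 / (t+1)^2)) (at t)" if "t > 0" for t
    using that by (auto intro!: derivative_eq_intros simp: field_simps power2_eq_square)
  have "?h 1 \<le> ?h c"
  proof (rule DERIV_nonneg_imp_nondecreasing[of 1 c])
    fix t assume t: "1 \<le> t" "t \<le> c"
    have "4 * t \<le> (t+1)^2"
      using zero_le_power2[of "t - 1"] by (simp add: power2_eq_square algebra_simps)
    then have "0 \<le> 1/t - 4/(t+1)^2" using t by (simp add: field_simps)
    then show "\<exists>y. (?h has_real_derivative y) (at t) \<and> 0 \<le> y" using deriv[of t] t by auto
  qed (use assms in auto)
  then show ?thesis by simp
qed

text \<open>With \<open>a = sqrt x\<close> and \<open>b = sqrt y\<close>, AM-GM bounds the difference by \<open>(a - b)/(a + b)\<close>,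
  which is at most \<open>ln (a/b) / 2\<close>.\<close>
lemma logistic_diff_le_ln_diff:
  fixes x y R :: real assumes "0 < y" "y \<le> x" "0 \<le> R"
  shows "x/(x+R) - y/(y+R) \<le> (ln x - ln y) / 4"
proof -
  define a where "a = sqrt x"
  define b where "b = sqrt y"
  have a: "a > 0" "x = a^2" and b: "b > 0" "y = b^2" and "b \<le> a"
    using assms by (auto simp: a_def b_def)
  have pos: "a^2+R > 0" "b^2+R > 0" "a + b > 0" using a b assms by (auto intro: add_pos_nonneg)
  have "x/(x+R) - y/(y+R) = R*(a^2-b^2)/((a^2+R)*(b^2+R))"
    using a b pos by (simp add: divide_simps) (simp add: algebra_simps)
  also have "\<dots> \<le> (a-b)/(a+b)"
  proof -
    have "R*(a+b)^2 \<le> (a^2+R)*(b^2+R)"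
      using zero_le_power2[of "a*b - R"] by (simp add: power2_eq_square algebra_simps)
    then have "R*(a+b)^2*(a-b) \<le> (a^2+R)*(b^2+R)*(a-b)" using \<open>b \<le> a\<close> by (intro mult_right_mono) auto
    moreover have "R*(a^2-b^2)*(a+b) = R*(a+b)^2*(a-b)" by (simp add: power2_eq_square algebra_simps)
    ultimately have "R*(a^2-b^2)*(a+b) \<le> (a-b)*((a^2+R)*(b^2+R))" by (simp add: algebra_simps)
    then show ?thesis using pos by (simp add: divide_simps mult.commute mult.left_commute)
  qed
  also have "\<dots> = ((a - b)/b)/((a + b)/b)" using b(1) by simp
  also have "\<dots> = (a/b - 1)/(a/b + 1)" using b(1) by (simp add: diff_divide_distrib add_divide_distrib)
  also have "\<dots> \<le> ln (a/b) / 2"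
    using ln_ge_two_mul_diff_div_add[of "a/b"] \<open>b \<le> a\<close> b by (simp add: mult.commute)
  also have "ln (a/b) = (ln x - ln y)/2" using a b by (simp add: ln_div ln_realpow)
  finally show ?thesis by simp
qed

lemma logistic_mono:
  fixes x y R :: real assumes "0 < y" "y \<le> x" "0 \<le> R"
  shows "y/(y+R) \<le> x/(x+R)"
proof -
  have "y*(x+R) \<le> x*(y+R)" using assms by (simp add: algebra_simps mult_left_mono)
  then show ?thesis using assms by (simp add: divide_simps)
qed

lemma abs_logistic_diff_le_ln_diff:
  fixes x y R :: real assumes "0 < x" "0 < y" "0 \<le> R"
  shows "\<bar>x/(x+R) - y/(y+R)\<bar> \<le> \<bar>ln x - ln y\<bar> / 4"
proof (cases "y \<le> x")
  case True
  then show ?thesis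
    using logistic_diff_le_ln_diff[of y x R] logistic_mono[of y x R] assms by simp
next
  case False
  then show ?thesis
    using logistic_diff_le_ln_diff[of x y R] logistic_mono[of x y R] assms by simp
qed

definition normalize_L1_dist :: "('i \<Rightarrow> real) \<Rightarrow> ('i \<Rightarrow> real) \<Rightarrow> 'i set \<Rightarrow> real" where
  "normalize_L1_dist x y I = (\<Sum>i\<in>I. \<bar>x i / sum x I - y i / sum y I\<bar>)"

lemma normalize_L1_dist_triangle:
  "normalize_L1_dist x z I \<le> normalize_L1_dist x y I + normalize_L1_dist y z I"
  unfolding normalize_L1_dist_def sum.distrib[symmetric] by (intro sum_mono) linarith

text \<open>If only the \<open>k\<close>-th weight changes, the other normalized weights all move by the same factor,
  so the distance is twice the change of the \<open>k\<close>-th one.\<close>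
lemma normalize_L1_dist_single_le:
  fixes x y :: "'i \<Rightarrow> real"
  assumes I: "finite I" "k \<in> I" and x: "\<forall>i\<in>I. 0 < x i" and y: "\<forall>i\<in>I. 0 < y i"
    and xy: "\<forall>i\<in>I-{k}. x i = y i"
  shows "normalize_L1_dist x y I \<le> \<bar>ln (x k) - ln (y k)\<bar> / 2"
proof -
  define R where "R = sum x (I - {k})"
  have R0: "0 \<le> R" unfolding R_def using x by (intro sum_nonneg) auto
  have Sx: "sum x I = x k + R" unfolding R_def using I by (simp add: sum.remove)
  have "sum y (I - {k}) = R" unfolding R_def using xy by (intro sum.cong) auto
  then have Sy: "sum y I = y k + R" using I by (simp add: sum.remove)
  have pos: "x k > 0" "y k > 0" using x y I by auto
  have rest: "\<bar>x i / sum x I - y i / sum y I\<bar> = x i * \<bar>1 / sum x I - 1 / sum y I\<bar>"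
    if "i \<in> I - {k}" for i
  proof -
    have "x i / sum x I - y i / sum y I = x i * (1 / sum x I - 1 / sum y I)"
      using xy that by (simp add: right_diff_distrib)
    then show ?thesis using x that by (simp add: abs_mult abs_of_pos)
  qed
  have "normalize_L1_dist x y I
      = \<bar>x k / sum x I - y k / sum y I\<bar> + (\<Sum>i\<in>I-{k}. \<bar>x i / sum x I - y i / sum y I\<bar>)"
    unfolding normalize_L1_dist_def using I by (rule sum.remove)
  also have "(\<Sum>i\<in>I-{k}. \<bar>x i / sum x I - y i / sum y I\<bar>) = R * \<bar>1 / sum x I - 1 / sum y I\<bar>"
    unfolding R_def sum_distrib_right using rest by (rule sum.cong[OF refl])
  also have "R * \<bar>1 / sum x I - 1 / sum y I\<bar> = \<bar>x k / sum x I - y k / sum y I\<bar>"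
    using pos R0 by (simp add: Sx Sy field_simps abs_mult abs_minus_commute)
      (metis abs_mult abs_of_nonneg right_diff_distrib)
  finally have "normalize_L1_dist x y I = 2 * \<bar>x k / (x k + R) - y k / (y k + R)\<bar>"
    by (simp add: Sx Sy)
  then show ?thesis using abs_logistic_diff_le_ln_diff[OF pos R0] by simp
qed

text \<open>Change the weights one at a time and sum the single-coordinate bounds.\<close>
lemma normalize_L1_dist_le:
  fixes x y :: "nat \<Rightarrow> real"
  assumes x: "\<forall>i<n. 0 < x i" and y: "\<forall>i<n. 0 < y i"
    and xy: "\<forall>i<n. \<bar>ln (x i) - ln (y i)\<bar> \<le> \<eta>"
  shows "normalize_L1_dist x y {..<n} \<le> real n * \<eta> / 2"
proof -
  define h where "h k = (\<lambda>i. if i < k then x i else y i)" for k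
  have "normalize_L1_dist (h m) y {..<n} \<le> real m * \<eta> / 2" if "m \<le> n" for m
    using that
  proof (induction m)
    case 0
    have "h 0 = y" by (simp add: h_def)
    then show ?case by (simp add: normalize_L1_dist_def)
  next
    case (Suc m)
    have "normalize_L1_dist (h (Suc m)) (h m) {..<n} \<le> \<bar>ln (x m) - ln (y m)\<bar> / 2"
      using normalize_L1_dist_single_le[of "{..<n}" m "h (Suc m)" "h m"] Suc.prems x y
      by (auto simp: h_def)
    also have "\<dots> \<le> \<eta> / 2" using xy Suc.prems by simp
    finally show ?case
      using normalize_L1_dist_triangle[of "h (Suc m)" y "{..<n}" "h m"] Suc by (simp add: field_simps)
  qed
  moreover have "normalize_L1_dist (h n) y {..<n} = normalize_L1_dist x y {..<n}"
    unfolding normalize_L1_dist_def by (auto simp: h_def intro!: sum.cong)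
  ultimately show ?thesis by (metis order_refl)
qed

lemma pair_prob_spaceI: "prob_space A \<Longrightarrow> prob_space B \<Longrightarrow> pair_prob_space A B"
  by (simp add: pair_prob_space_def pair_sigma_finite_def prob_space_imp_sigma_finite)

lemma integrable_bounded_prob_space:
  fixes f :: "'b \<Rightarrow> real"
  assumes "prob_space A" "f \<in> borel_measurable A" "\<And>x. x \<in> space A \<Longrightarrow> \<bar>f x\<bar> \<le> c"
  shows "integrable A f"
proof -
  interpret prob_space A by fact
  show ?thesis by (rule integrable_const_bound[where B=c]) (use assms in auto)
qed

lemma abs_integral_le_bound_prob_space:
  fixes f :: "'b \<Rightarrow> real"
  assumes "prob_space A" "\<And>x. x \<in> space A \<Longrightarrow> \<bar>f x\<bar> \<le> c"
  shows "\<bar>integral\<^sup>L A f\<bar> \<le> c"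
proof -
  interpret prob_space A by fact
  show ?thesis
  proof (cases "integrable A f")
    case True
    have "\<bar>integral\<^sup>L A f\<bar> \<le> (\<integral>x. \<bar>f x\<bar> \<partial>A)" by (rule integral_abs_bound)
    also have "\<dots> \<le> c" using True assms(2) by (intro integral_le_const AE_I2) auto
    finally show ?thesis .
  next
    case False
    obtain x where "x \<in> space A" using not_empty by auto
    then have "0 \<le> c" using assms(2)[of x] by linarith
    then show ?thesis using False by (simp add: not_integrable_integral_eq)
  qed
qed

lemma is_density_prob_space: assumes "is_density M p" shows "prob_space (density M p)"
proof
  have p: "p \<in> borel_measurable M" "\<forall>x\<in>space M. 0 \<le> p x" "integrable M p" "(\<integral>x. p x \<partial>M) = 1"
    using assms by (auto simp: is_density_def)
  have "emeasure (density M p) (space M) = (\<integral>\<^sup>+x. ennreal (p x) \<partial>M)"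
    using p by (simp add: emeasure_density nn_integral_set_ennreal[symmetric] cong: nn_integral_cong)
  also have "\<dots> = 1" using p by (subst nn_integral_eq_integral) auto
  finally show "emeasure (density M p) (space (density M p)) = 1" by simp
qed

lemma integral_abs_diff_eq_sgn:
  fixes f g :: "'a \<Rightarrow> real"
  assumes f: "integrable M f" and g: "integrable M g"
  shows "(\<integral>x. \<bar>f x - g x\<bar> \<partial>M) = (\<integral>x. sgn (f x - g x) * f x \<partial>M) - (\<integral>x. sgn (f x - g x) * g x \<partial>M)"
proof -
  have integrable: "integrable M (\<lambda>x. sgn (f x - g x) * h x)" if h: "integrable M h" for h :: "'a \<Rightarrow> real"
  proof (rule Bochner_Integration.integrable_bound[OF integrable_abs[OF h]])
    show "(\<lambda>x. sgn (f x - g x) * h x) \<in> borel_measurable M" using f g h by measurable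
    show "AE x in M. norm (sgn (f x - g x) * h x) \<le> norm \<bar>h x\<bar>"
      by (intro AE_I2) (simp add: abs_mult mult_left_le_one_le abs_sgn_eq)
  qed
  have "(\<integral>x. \<bar>f x - g x\<bar> \<partial>M) = (\<integral>x. sgn (f x - g x) * f x - sgn (f x - g x) * g x \<partial>M)"
    by (intro Bochner_Integration.integral_cong refl) (simp add: abs_sgn left_diff_distrib mult.commute)
  also have "\<dots> = (\<integral>x. sgn (f x - g x) * f x \<partial>M) - (\<integral>x. sgn (f x - g x) * g x \<partial>M)"
    by (rule Bochner_Integration.integral_diff[OF integrable[OF f] integrable[OF g]])
  finally show ?thesis .
qed

lemma abs_integral_density_diff_le:
  fixes h :: "'a \<Rightarrow> real"
  assumes p: "is_density M p" and q: "is_density M q"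
    and h: "h \<in> borel_measurable M" and h_bound: "\<And>x. \<bar>h x\<bar> \<le> 1"
  shows "\<bar>integral\<^sup>L (density M p) h - integral\<^sup>L (density M q) h\<bar> \<le> (\<integral>x. \<bar>p x - q x\<bar> \<partial>M)"
proof -
  have density_integral: "integral\<^sup>L (density M s) h = (\<integral>x. s x * h x \<partial>M)"
    and integrable: "integrable M (\<lambda>x. s x * h x)" if "is_density M s" for s
  proof -
    have s: "s \<in> borel_measurable M" "\<forall>x\<in>space M. 0 \<le> s x" "integrable M s"
      using that by (auto simp: is_density_def)
    show "integral\<^sup>L (density M s) h = (\<integral>x. s x * h x \<partial>M)"
      using s h by (subst integral_density) auto
    show "integrable M (\<lambda>x. s x * h x)"
      using s h h_bound by (intro Bochner_Integration.integrable_bound[OF s(3)] AE_I2)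
        (auto simp: abs_mult mult_left_le)
  qed
  have integrable_diff: "integrable M (\<lambda>x. (p x - q x) * h x)"
    using integrable[OF p] integrable[OF q] by (simp add: left_diff_distrib)
  have "integral\<^sup>L (density M p) h - integral\<^sup>L (density M q) h = (\<integral>x. (p x - q x) * h x \<partial>M)"
    using integrable[OF p] integrable[OF q]
    by (simp add: density_integral[OF p] density_integral[OF q] left_diff_distrib)
  also have "\<bar>\<dots>\<bar> \<le> (\<integral>x. \<bar>(p x - q x) * h x\<bar> \<partial>M)" by (rule integral_abs_bound)
  also have "\<dots> \<le> (\<integral>x. \<bar>p x - q x\<bar> \<partial>M)"
    using integrable_abs[OF integrable_diff] p q h_bound
    by (intro integral_mono) (auto simp: is_density_def abs_mult mult_left_le)
  finally show ?thesis .
qed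

lemma integral_density_pair:
  fixes g :: "'a \<times> 'b \<Rightarrow> real"
  assumes p: "is_density M p" and N: "prob_space N"
    and g: "g \<in> borel_measurable (M \<Otimes>\<^sub>M N)" and g_bound: "\<And>z. \<bar>g z\<bar> \<le> c"
  shows "integral\<^sup>L (density M p \<Otimes>\<^sub>M N) g = integral\<^sup>L (density M p) (\<lambda>x. \<integral>y. g (x, y) \<partial>N)"
proof -
  interpret pair_prob_space "density M p" N by (rule pair_prob_spaceI[OF is_density_prob_space[OF p] N])
  have "integrable (density M p \<Otimes>\<^sub>M N) g"
    using g g_bound by (intro integrable_bounded_prob_space[OF prob_space_axioms]) auto
  then show ?thesis by (rule integral_fst'[symmetric])
qed

lemma abs_integral_density_pair_diff_le:
  fixes g :: "'a \<times> 'b \<Rightarrow> real"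
  assumes p: "is_density M p" and q: "is_density M q" and N: "prob_space N"
    and g: "g \<in> borel_measurable (M \<Otimes>\<^sub>M N)" and g_bound: "\<And>z. \<bar>g z\<bar> \<le> 1"
  shows "\<bar>integral\<^sup>L (density M p \<Otimes>\<^sub>M N) g - integral\<^sup>L (density M q \<Otimes>\<^sub>M N) g\<bar>
    \<le> (\<integral>x. \<bar>p x - q x\<bar> \<partial>M)"
proof -
  have "(\<lambda>x. \<integral>y. g (x, y) \<partial>N) \<in> borel_measurable M"
    using sigma_finite_measure.borel_measurable_lebesgue_integral[OF prob_space_imp_sigma_finite[OF N],
        of "\<lambda>x y. g (x, y)"] g
    by simp
  moreover have "\<bar>\<integral>y. g (x, y) \<partial>N\<bar> \<le> 1" for x
    using N g_bound by (rule abs_integral_le_bound_prob_space)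
  ultimately show ?thesis
    unfolding integral_density_pair[OF p N g g_bound] integral_density_pair[OF q N g g_bound]
    by (rule abs_integral_density_diff_le[OF p q])
qed

lemma measurable_PiM_component_comp:
  "i \<in> I \<Longrightarrow> f \<in> measurable X Y \<Longrightarrow> (\<lambda>z. f (z i)) \<in> measurable (PiM I (\<lambda>_. X)) Y"
  by (erule measurable_compose[OF measurable_component_singleton])

lemma measurable_PiM_lessThan_upd:
  "(\<lambda>(x, X). X(n := x)) \<in> measurable (\<mu> \<Otimes>\<^sub>M PiM {..<n} (\<lambda>_. \<mu>)) (PiM {..<Suc n} (\<lambda>_. \<mu>))"
  unfolding split_beta' by (rule measurable_fun_upd[where J="{..<n}"]) auto

lemma integral_PiM_lessThan_Suc:
  fixes f :: "(nat \<Rightarrow> 'a) \<Rightarrow> real"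
  assumes \<mu>: "prob_space \<mu>" and f: "f \<in> borel_measurable (PiM {..<Suc n} (\<lambda>_. \<mu>))"
    and f_bound: "\<And>z. \<bar>f z\<bar> \<le> c"
  shows "integral\<^sup>L (PiM {..<Suc n} (\<lambda>_. \<mu>)) f
    = (\<integral>x. (\<integral>X. f (X(n := x)) \<partial>PiM {..<n} (\<lambda>_. \<mu>)) \<partial>\<mu>)"
proof -
  let ?Pn = "PiM {..<n} (\<lambda>_. \<mu>)" and ?E = "\<lambda>(x, X). X(n := x)"
  interpret pair_prob_space \<mu> ?Pn by (rule pair_prob_spaceI[OF \<mu> prob_space_PiM[OF \<mu>]])
  have "insert n {..<n} = {..<Suc n}" by auto
  then have distr_E: "distr (\<mu> \<Otimes>\<^sub>M ?Pn) (PiM {..<Suc n} (\<lambda>_. \<mu>)) ?E = PiM {..<Suc n} (\<lambda>_. \<mu>)"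
    using distr_pair_PiM_eq_PiM[of "{..<n}" "\<lambda>_. \<mu>" n] \<mu> by simp
  have fE: "(\<lambda>v. f (?E v)) \<in> borel_measurable (\<mu> \<Otimes>\<^sub>M ?Pn)"
    by (rule measurable_compose[OF measurable_PiM_lessThan_upd f])
  have "integral\<^sup>L (PiM {..<Suc n} (\<lambda>_. \<mu>)) f = (\<integral>v. f (?E v) \<partial>(\<mu> \<Otimes>\<^sub>M ?Pn))"
    by (subst distr_E[symmetric], rule integral_distr[OF measurable_PiM_lessThan_upd f])
  also have "\<dots> = (\<integral>x. (\<integral>X. f (X(n := x)) \<partial>?Pn) \<partial>\<mu>)"
    using integral_fst'[OF integrable_bounded_prob_space[OF prob_space_axioms fE f_bound]]
    by (simp add: split_beta')
  finally show ?thesis .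
qed

lemma borel_measurable_integral_PiM_upd:
  fixes f :: "(nat \<Rightarrow> 'a) \<Rightarrow> real"
  assumes \<mu>: "prob_space \<mu>" and f: "f \<in> borel_measurable (PiM {..<Suc n} (\<lambda>_. \<mu>))"
  shows "(\<lambda>x. \<integral>X. f (X(n := x)) \<partial>PiM {..<n} (\<lambda>_. \<mu>)) \<in> borel_measurable \<mu>"
proof -
  have "(\<lambda>(x, X). f (X(n := x))) \<in> borel_measurable (\<mu> \<Otimes>\<^sub>M PiM {..<n} (\<lambda>_. \<mu>))"
    using measurable_compose[OF measurable_PiM_lessThan_upd f] by (simp add: split_beta')
  then show ?thesis
    by (rule sigma_finite_measure.borel_measurable_lebesgue_integral[OF
          prob_space_imp_sigma_finite[OF prob_space_PiM[OF \<mu>]]])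
qed

text \<open>Total variation is subadditive under products: swap the factors one at a time.\<close>
lemma abs_integral_PiM_diff_le:
  fixes \<Psi> :: "(nat \<Rightarrow> 'a) \<Rightarrow> real"
  assumes \<mu>: "prob_space \<mu>" and \<nu>: "prob_space \<nu>" and sets_eq: "sets \<nu> = sets \<mu>"
    and dist: "\<And>g. g \<in> borel_measurable \<mu> \<Longrightarrow> (\<And>x. \<bar>g x\<bar> \<le> 1) \<Longrightarrow>
      \<bar>integral\<^sup>L \<mu> g - integral\<^sup>L \<nu> g\<bar> \<le> c"
    and \<Psi>: "\<Psi> \<in> borel_measurable (PiM {..<n} (\<lambda>_. \<mu>))" and \<Psi>_bound: "\<And>z. \<bar>\<Psi> z\<bar> \<le> 1"
  shows "\<bar>integral\<^sup>L (PiM {..<n} (\<lambda>_. \<mu>)) \<Psi> - integral\<^sup>L (PiM {..<n} (\<lambda>_. \<nu>)) \<Psi>\<bar> \<le> real n * c"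
  using \<Psi> \<Psi>_bound
proof (induction n arbitrary: \<Psi>)
  case 0
  then show ?case by (simp add: PiM_empty)
next
  case (Suc n)
  define G where "G s x = (\<integral>X. \<Psi> (X(n := x)) \<partial>PiM {..<n} (\<lambda>_. s))" for s x
  have G_bound: "\<bar>G s x\<bar> \<le> 1" if "prob_space s" for s x
    unfolding G_def using prob_space_PiM[OF that] Suc.prems(2) by (rule abs_integral_le_bound_prob_space)
  have \<Psi>_upd: "(\<lambda>X. \<Psi> (X(n := x))) \<in> borel_measurable (PiM {..<n} (\<lambda>_. \<mu>))" if "x \<in> space \<mu>" for x
    using that by (intro measurable_compose[OF measurable_fun_upd[where J="{..<n}"] Suc.prems(1)]) auto
  have G: "G s \<in> borel_measurable \<mu>"
    and integral_Suc: "integral\<^sup>L (PiM {..<Suc n} (\<lambda>_. s)) \<Psi> = integral\<^sup>L s (G s)"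
    if s: "prob_space s" "sets s = sets \<mu>" for s
  proof -
    have sets_PiM: "sets (PiM I (\<lambda>_. s)) = sets (PiM I (\<lambda>_. \<mu>))" for I :: "nat set"
      using s(2) by (intro sets_PiM_cong) auto
    have \<Psi>s: "\<Psi> \<in> borel_measurable (PiM {..<Suc n} (\<lambda>_. s))"
      using Suc.prems(1) by (simp cong: measurable_cong_sets add: sets_PiM)
    have "G s \<in> borel_measurable s"
      unfolding G_def[abs_def] by (rule borel_measurable_integral_PiM_upd[OF s(1) \<Psi>s])
    then show "G s \<in> borel_measurable \<mu>" using s(2) by (simp cong: measurable_cong_sets)
    show "integral\<^sup>L (PiM {..<Suc n} (\<lambda>_. s)) \<Psi> = integral\<^sup>L s (G s)"
      unfolding G_def by (rule integral_PiM_lessThan_Suc[OF s(1) \<Psi>s Suc.prems(2)])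
  qed
  have integrable_G: "integrable \<mu> (G s)" if "prob_space s" "sets s = sets \<mu>" for s
    using \<mu> G[OF that] G_bound[OF that(1)] by (rule integrable_bounded_prob_space)
  have "integral\<^sup>L (PiM {..<Suc n} (\<lambda>_. \<mu>)) \<Psi> - integral\<^sup>L (PiM {..<Suc n} (\<lambda>_. \<nu>)) \<Psi>
      = (\<integral>x. G \<mu> x - G \<nu> x \<partial>\<mu>) + (integral\<^sup>L \<mu> (G \<nu>) - integral\<^sup>L \<nu> (G \<nu>))"
    using integrable_G[OF \<mu> refl] integrable_G[OF \<nu> sets_eq]
    by (simp add: integral_Suc[OF \<mu> refl] integral_Suc[OF \<nu> sets_eq])
  also have "\<bar>\<dots>\<bar> \<le> real n * c + c"
  proof (rule order_trans[OF abs_triangle_ineq add_mono])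
    have "\<bar>G \<mu> x - G \<nu> x\<bar> \<le> real n * c" if "x \<in> space \<mu>" for x
      unfolding G_def using \<Psi>_upd[OF that] Suc.prems(2) by (rule Suc.IH)
    then show "\<bar>\<integral>x. G \<mu> x - G \<nu> x \<partial>\<mu>\<bar> \<le> real n * c"
      by (rule abs_integral_le_bound_prob_space[OF \<mu>])
    show "\<bar>integral\<^sup>L \<mu> (G \<nu>) - integral\<^sup>L \<nu> (G \<nu>)\<bar> \<le> c"
      using G[OF \<nu> sets_eq] G_bound[OF \<nu>] by (rule dist)
  qed
  finally show ?case by (simp add: algebra_simps)
qed

locale softmax_selection =
  fixes M :: "'a measure" and N :: "real measure" and r :: "'a \<Rightarrow> real" and K :: nat
  assumes prob_space_N: "prob_space N" and sets_N [measurable_cong]: "sets N = sets borel"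
    and r_measurable [measurable]: "r \<in> borel_measurable M" and two_le_K: "2 \<le> K"
begin

definition candidate :: "('a \<Rightarrow> real) \<Rightarrow> ('a \<times> real) measure" where
  "candidate p = density M p \<Otimes>\<^sub>M N"

definition candidates :: "('a \<Rightarrow> real) \<Rightarrow> nat \<Rightarrow> (nat \<Rightarrow> 'a \<times> real) measure" where
  "candidates p n = PiM {..<n} (\<lambda>_. candidate p)"

definition score :: "('a \<Rightarrow> real) \<Rightarrow> 'a \<times> real \<Rightarrow> real" where
  "score d v = exp (r (fst v) + d (fst v) + snd v)"

definition softmax_weight :: "('a \<Rightarrow> real) \<Rightarrow> (nat \<Rightarrow> 'a \<times> real) \<Rightarrow> nat \<Rightarrow> real" where
  "softmax_weight d z i = score d (z i) / (\<Sum>j<K. score d (z j))"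

lemma sets_candidate [measurable_cong]: "sets (candidate p) = sets (M \<Otimes>\<^sub>M borel)"
  unfolding candidate_def by (intro sets_pair_measure_cong) (auto simp: sets_N)

lemma sets_candidates [measurable_cong]: "sets (candidates p n) = sets (PiM {..<n} (\<lambda>_. M \<Otimes>\<^sub>M borel))"
  unfolding candidates_def by (intro sets_PiM_cong) (auto simp: sets_candidate)

lemma measurable_candidate_iff: "measurable (candidate p) X = measurable (M \<Otimes>\<^sub>M borel) X"
  by (rule measurable_cong_sets[OF sets_candidate refl])

lemma measurable_candidates_iff: "measurable (candidates p n) X = measurable (PiM {..<n} (\<lambda>_. M \<Otimes>\<^sub>M borel)) X"
  by (rule measurable_cong_sets[OF sets_candidates refl])

lemma prob_space_candidate: "is_density M p \<Longrightarrow> prob_space (candidate p)"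
  unfolding candidate_def by (intro prob_space_pair is_density_prob_space prob_space_N)

lemma prob_space_candidates: "is_density M p \<Longrightarrow> prob_space (candidates p n)"
  unfolding candidates_def by (intro prob_space_PiM prob_space_candidate)

lemma score_measurable [measurable]:
  assumes [measurable]: "d \<in> borel_measurable M"
  shows "score d \<in> borel_measurable (M \<Otimes>\<^sub>M borel)"
  unfolding score_def by measurable

lemma score_pos [simp]: "0 < score d v"
  by (simp add: score_def)

lemma score_component_measurable:
  assumes d: "d \<in> borel_measurable M" and i: "i \<in> I"
  shows "(\<lambda>z. score d (z i)) \<in> borel_measurable (PiM I (\<lambda>_. M \<Otimes>\<^sub>M borel))"
  using i score_measurable[OF d] by (rule measurable_PiM_component_comp)

lemma softmax_weight_measurable:
  assumes d: "d \<in> borel_measurable M" and i: "i < K"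
  shows "(\<lambda>z. softmax_weight d z i) \<in> borel_measurable (PiM {..<K} (\<lambda>_. M \<Otimes>\<^sub>M borel))"
  unfolding softmax_weight_def
  by (intro borel_measurable_divide borel_measurable_sum score_component_measurable[OF d]) (use i in auto)

lemma sum_score_pos: "0 < (\<Sum>j<K. score d (z j))"
  using two_le_K by (intro sum_pos) (auto simp: lessThan_empty_iff)

lemma softmax_weight_nonneg: "0 \<le> softmax_weight d z i"
  unfolding softmax_weight_def using sum_score_pos by (simp add: less_imp_le)

lemma sum_softmax_weight: "(\<Sum>i<K. softmax_weight d z i) = 1"
  unfolding softmax_weight_def using sum_score_pos[of d z] by (simp add: sum_divide_distrib[symmetric])

lemma softmax_weight_le_1: "i < K \<Longrightarrow> softmax_weight d z i \<le> 1"
  using member_le_sum[of i "{..<K}" "softmax_weight d z"] softmax_weight_nonneg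
  by (simp add: sum_softmax_weight)

definition weight_against :: "('a \<Rightarrow> real) \<Rightarrow> 'a \<times> real \<Rightarrow> (nat \<Rightarrow> 'a \<times> real) \<Rightarrow> real" where
  "weight_against d v z = score d v / (score d v + (\<Sum>k<K - 1. score d (z k)))"

lemma softmax_weight_upd_last: "softmax_weight d (z(K - 1 := v)) (K - 1) = weight_against d v z"
proof -
  have "{..<K} = insert (K - 1) {..<K - 1}" using two_le_K by auto
  moreover have "(\<Sum>k<K - 1. score d ((z(K - 1 := v)) k)) = (\<Sum>k<K - 1. score d (z k))"
    by (intro sum.cong) auto
  ultimately show ?thesis unfolding softmax_weight_def weight_against_def by simp
qed

lemma weight_against_nonneg: "0 \<le> weight_against d v z"
  and weight_against_le_1: "weight_against d v z \<le> 1"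
  using softmax_weight_nonneg softmax_weight_le_1[of "K - 1"] two_le_K
  by (auto simp flip: softmax_weight_upd_last)

lemma weight_against_measurable [measurable]:
  assumes d [measurable]: "d \<in> borel_measurable M"
  shows "(\<lambda>(v, z). weight_against d v z)
    \<in> borel_measurable ((M \<Otimes>\<^sub>M borel) \<Otimes>\<^sub>M PiM {..<K - 1} (\<lambda>_. M \<Otimes>\<^sub>M borel))"
proof -
  have [measurable]: "(\<lambda>z. \<Sum>k<K - 1. score d (z k)) \<in> borel_measurable (PiM {..<K - 1} (\<lambda>_. M \<Otimes>\<^sub>M borel))"
    by (intro borel_measurable_sum score_component_measurable[OF d]) auto
  show ?thesis unfolding weight_against_def by measurable
qed

lemma H_kernel_eq:
  "H_kernel K M N r p d x = (\<integral>w. real K * weight_against d (x, fst w) (snd w) \<partial>(N \<Otimes>\<^sub>M candidates p (K - 1)))"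
  unfolding H_kernel_def candidates_def candidate_def weight_against_def score_def by simp

lemma H_kernel_measurable:
  assumes p: "is_density M p" and d [measurable]: "d \<in> borel_measurable M"
  shows "H_kernel K M N r p d \<in> borel_measurable M"
proof -
  interpret NQ: pair_prob_space N "candidates p (K - 1)"
    by (rule pair_prob_spaceI[OF prob_space_N prob_space_candidates[OF p]])
  have "(\<lambda>(x, w). real K * weight_against d (x, fst w) (snd w)) \<in> borel_measurable (M \<Otimes>\<^sub>M (N \<Otimes>\<^sub>M candidates p (K - 1)))"
    by measurable
  then show ?thesis
    unfolding H_kernel_eq[abs_def] by (rule NQ.P.borel_measurable_lebesgue_integral)
qed

lemma H_kernel_nonneg: "is_density M p \<Longrightarrow> 0 \<le> H_kernel K M N r p d x"
  unfolding H_kernel_eq by (intro Bochner_Integration.integral_nonneg mult_nonneg_nonneg weight_against_nonneg) simp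

lemma H_kernel_le:
  assumes p: "is_density M p" shows "H_kernel K M N r p d x \<le> real K"
proof -
  have "\<bar>real K * weight_against d (x, fst w) (snd w)\<bar> \<le> real K" for w
    using weight_against_nonneg weight_against_le_1 by (simp add: mult_left_le)
  then have "\<bar>H_kernel K M N r p d x\<bar> \<le> real K" unfolding H_kernel_eq
    by (intro abs_integral_le_bound_prob_space[OF prob_space_pair[OF prob_space_N prob_space_candidates[OF p]]])
  then show ?thesis by simp
qed

definition selected :: "('a \<Rightarrow> real) \<Rightarrow> ('a \<Rightarrow> real) \<Rightarrow> 'a \<Rightarrow> real" where
  "selected d p x = p x * H_kernel K M N r p d x"

lemma abs_mult_weight_against_le:
  "\<bar>c\<bar> \<le> 1 \<Longrightarrow> \<bar>c * (real K * weight_against d v z)\<bar> \<le> real K"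
  using mult_mono[of "\<bar>c\<bar>" 1 "real K * weight_against d v z" "real K"]
    weight_against_nonneg[of d v z] weight_against_le_1[of d v z]
  by (simp add: abs_mult mult_left_le)

lemma integral_candidates_last:
  assumes p: "is_density M p" and d: "d \<in> borel_measurable M"
    and \<psi>: "\<psi> \<in> borel_measurable (M \<Otimes>\<^sub>M borel)" and \<psi>_bound: "\<And>v. \<bar>\<psi> v\<bar> \<le> 1"
  shows "(\<integral>z. real K * \<psi> (z (K - 1)) * softmax_weight d z (K - 1) \<partial>candidates p K)
    = (\<integral>v. (\<integral>z. \<psi> v * (real K * weight_against d v z) \<partial>candidates p (K - 1)) \<partial>candidate p)"
proof -
  define f where "f z = real K * \<psi> (z (K - 1)) * softmax_weight d z (K - 1)" for z
  have K: "Suc (K - 1) = K" using two_le_K by simp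
  have f_upd: "f (z(K - 1 := v)) = \<psi> v * (real K * weight_against d v z)" for z v
    unfolding f_def softmax_weight_upd_last by simp
  have f: "f \<in> borel_measurable (PiM {..<Suc (K - 1)} (\<lambda>_. candidate p))"
    unfolding K measurable_candidates_iff[of p K, unfolded candidates_def] f_def
    using two_le_K by (intro borel_measurable_times measurable_PiM_component_comp[OF _ \<psi>]
        softmax_weight_measurable[OF d]) auto
  have f_bound: "\<bar>f z\<bar> \<le> real K" for z
    using abs_mult_weight_against_le[OF \<psi>_bound] f_upd[of z "z (K - 1)"] by simp
  have "integral\<^sup>L (PiM {..<Suc (K - 1)} (\<lambda>_. candidate p)) f
      = (\<integral>v. (\<integral>z. f (z(K - 1 := v)) \<partial>candidates p (K - 1)) \<partial>candidate p)"
    unfolding candidates_def by (rule integral_PiM_lessThan_Suc[OF prob_space_candidate[OF p] f f_bound])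
  then show ?thesis unfolding K f_upd by (simp add: f_def[abs_def] candidates_def)
qed

lemma integral_mult_selected_eq_last:
  assumes p: "is_density M p" and d [measurable]: "d \<in> borel_measurable M"
    and \<phi> [measurable]: "\<phi> \<in> borel_measurable M" and \<phi>_bound: "\<And>x. \<bar>\<phi> x\<bar> \<le> 1"
  shows "(\<integral>x. \<phi> x * selected d p x \<partial>M)
    = (\<integral>z. real K * \<phi> (fst (z (K - 1))) * softmax_weight d z (K - 1) \<partial>candidates p K)"
proof -
  let ?Q = "candidates p (K - 1)"
  interpret NQ: pair_prob_space N ?Q by (rule pair_prob_spaceI[OF prob_space_N prob_space_candidates[OF p]])
  have p_nonneg: "\<And>x. x \<in> space M \<Longrightarrow> 0 \<le> p x" and [measurable]: "p \<in> borel_measurable M"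
    using p by (auto simp: is_density_def)
  define F where "F v z = \<phi> (fst v) * (real K * weight_against d v z)" for v z
  have F_bound: "\<bar>F v z\<bar> \<le> real K" for v z
    unfolding F_def using \<phi>_bound by (rule abs_mult_weight_against_le)
  define G where "G v = (\<integral>z. F v z \<partial>?Q)" for v
  have G_bound: "\<bar>G v\<bar> \<le> real K" for v
    unfolding G_def using prob_space_candidates[OF p] F_bound by (rule abs_integral_le_bound_prob_space)
  have "(\<lambda>(v, z). F v z) \<in> borel_measurable ((M \<Otimes>\<^sub>M N) \<Otimes>\<^sub>M ?Q)"
    unfolding F_def by measurable
  then have G [measurable]: "G \<in> borel_measurable (M \<Otimes>\<^sub>M N)"
    unfolding G_def[abs_def] by (rule NQ.M2.borel_measurable_lebesgue_integral)
  have "(\<integral>x. \<phi> x * selected d p x \<partial>M) = (\<integral>x. \<phi> x * H_kernel K M N r p d x \<partial>density M p)"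
    using H_kernel_measurable[OF p d] p_nonneg
    by (subst integral_density) (auto simp: selected_def mult.left_commute)
  also have "\<dots> = (\<integral>x. (\<integral>e. G (x, e) \<partial>N) \<partial>density M p)"
  proof (rule Bochner_Integration.integral_cong[OF refl])
    fix x assume "x \<in> space (density M p)"
    then have "(\<lambda>w. F (x, fst w) (snd w)) \<in> borel_measurable (N \<Otimes>\<^sub>M ?Q)"
      unfolding F_def by measurable
    then have "integrable (N \<Otimes>\<^sub>M ?Q) (\<lambda>w. F (x, fst w) (snd w))"
      using F_bound by (intro integrable_bounded_prob_space[OF NQ.P.prob_space_axioms])
    then have "(\<integral>w. F (x, fst w) (snd w) \<partial>(N \<Otimes>\<^sub>M ?Q)) = (\<integral>e. G (x, e) \<partial>N)"
      unfolding G_def by (subst NQ.integral_fst'[symmetric]) simp_all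
    then show "\<phi> x * H_kernel K M N r p d x = (\<integral>e. G (x, e) \<partial>N)"
      unfolding H_kernel_eq by (simp add: F_def)
  qed
  also have "\<dots> = (\<integral>v. G v \<partial>candidate p)"
    unfolding candidate_def by (rule integral_density_pair[OF p prob_space_N G G_bound, symmetric])
  also have "\<dots> = (\<integral>z. real K * \<phi> (fst (z (K - 1))) * softmax_weight d z (K - 1) \<partial>candidates p K)"
    unfolding G_def F_def
    by (rule integral_candidates_last[where \<psi>="\<lambda>v. \<phi> (fst v)", symmetric]) (use p d \<phi>_bound in auto)
  finally show ?thesis .
qed

lemma integral_softmax_weight_swap:
  assumes p: "is_density M p" and d: "d \<in> borel_measurable M"
    and f: "f \<in> borel_measurable (M \<Otimes>\<^sub>M borel)" and i: "i < K" and j: "j < K"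
  shows "(\<integral>z. f (z i) * softmax_weight d z i \<partial>candidates p K) = (\<integral>z. f (z j) * softmax_weight d z j \<partial>candidates p K)"
proof -
  let ?t = "Transposition.transpose i j" and ?I = "{..<K}"
  define T where "T \<omega> = (\<lambda>n\<in>?I. \<omega> (?t n))" for \<omega> :: "nat \<Rightarrow> 'a \<times> real"
  have t: "bij_betw ?t ?I ?I" using i j by simp
  have "?t \<in> ?I \<rightarrow> ?I" using bij_betw_imp_funcset[OF t] .
  then have distr_T: "distr (candidates p K) (candidates p K) T = candidates p K"
    unfolding candidates_def T_def
    using distr_PiM_reindex[of ?I "\<lambda>_. candidate p" ?t ?I] prob_space_candidate[OF p] bij_betw_imp_inj_on[OF t]
    by simp
  have T: "T \<in> measurable (candidates p K) (candidates p K)"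
    unfolding T_def candidates_def
    by (rule measurable_restrict, rule measurable_component_singleton)
      (use i j in \<open>auto simp: Transposition.transpose_def\<close>)
  have h: "(\<lambda>z. f (z j) * softmax_weight d z j) \<in> borel_measurable (candidates p K)"
    unfolding measurable_candidates_iff using j
    by (intro borel_measurable_times measurable_PiM_component_comp[OF _ f]
        softmax_weight_measurable[OF d]) auto
  have weight_T: "softmax_weight d (T \<omega>) j = softmax_weight d \<omega> i" for \<omega>
  proof -
    have "(\<Sum>n\<in>?I. score d (T \<omega> n)) = (\<Sum>n\<in>?I. score d (\<omega> (?t n)))"
      unfolding T_def by (intro sum.cong) auto
    also have "\<dots> = (\<Sum>n\<in>?I. score d (\<omega> n))" by (rule sum.reindex_bij_betw[OF t])
    finally show ?thesis using j unfolding softmax_weight_def by (simp add: T_def)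
  qed
  have "(\<integral>z. f (z j) * softmax_weight d z j \<partial>candidates p K)
      = (\<integral>\<omega>. f (T \<omega> j) * softmax_weight d (T \<omega>) j \<partial>candidates p K)"
    by (subst (1) distr_T[symmetric]) (rule integral_distr[OF T h])
  also have "\<dots> = (\<integral>z. f (z i) * softmax_weight d z i \<partial>candidates p K)"
    unfolding weight_T using j by (simp add: T_def)
  finally show ?thesis ..
qed

definition softmax_mean :: "('a \<Rightarrow> real) \<Rightarrow> ('a \<Rightarrow> real) \<Rightarrow> (nat \<Rightarrow> 'a \<times> real) \<Rightarrow> real" where
  "softmax_mean d \<phi> z = (\<Sum>i<K. \<phi> (fst (z i)) * softmax_weight d z i)"

lemma softmax_mean_measurable:
  assumes d: "d \<in> borel_measurable M" and \<phi> [measurable]: "\<phi> \<in> borel_measurable M"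
  shows "softmax_mean d \<phi> \<in> borel_measurable (candidates p K)"
proof -
  have "(\<lambda>v. \<phi> (fst v)) \<in> borel_measurable (M \<Otimes>\<^sub>M borel)" by measurable
  then show ?thesis
    unfolding softmax_mean_def[abs_def] measurable_candidates_iff
    by (intro borel_measurable_sum borel_measurable_times measurable_PiM_component_comp
        softmax_weight_measurable[OF d]) auto
qed

lemma abs_softmax_mean_le:
  assumes "\<And>x. \<bar>\<phi> x\<bar> \<le> 1" shows "\<bar>softmax_mean d \<phi> z\<bar> \<le> 1"
proof -
  have "\<bar>softmax_mean d \<phi> z\<bar> \<le> (\<Sum>i<K. \<bar>\<phi> (fst (z i)) * softmax_weight d z i\<bar>)"
    unfolding softmax_mean_def by (rule sum_abs)
  also have "\<dots> \<le> (\<Sum>i<K. softmax_weight d z i)"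
    using assms softmax_weight_nonneg by (intro sum_mono) (auto simp: abs_mult intro!: mult_left_le_one_le)
  finally show ?thesis by (simp add: sum_softmax_weight)
qed

lemma integral_mult_selected:
  assumes p: "is_density M p" and d [measurable]: "d \<in> borel_measurable M"
    and \<phi> [measurable]: "\<phi> \<in> borel_measurable M" and \<phi>_bound: "\<And>x. \<bar>\<phi> x\<bar> \<le> 1"
  shows "(\<integral>x. \<phi> x * selected d p x \<partial>M) = (\<integral>z. softmax_mean d \<phi> z \<partial>candidates p K)"
proof -
  have \<phi>_fst: "(\<lambda>v. \<phi> (fst v)) \<in> borel_measurable (M \<Otimes>\<^sub>M borel)" by measurable
  have "integrable (candidates p K) (\<lambda>z. \<phi> (fst (z i)) * softmax_weight d z i)" if "i < K" for i
  proof (rule integrable_bounded_prob_space[OF prob_space_candidates[OF p]])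
    show "(\<lambda>z. \<phi> (fst (z i)) * softmax_weight d z i) \<in> borel_measurable (candidates p K)"
      unfolding measurable_candidates_iff using that
      by (intro borel_measurable_times measurable_PiM_component_comp[OF _ \<phi>_fst]
          softmax_weight_measurable[OF d]) auto
    show "\<bar>\<phi> (fst (z i)) * softmax_weight d z i\<bar> \<le> 1" for z
      using \<phi>_bound[of "fst (z i)"] softmax_weight_nonneg[of d z i] softmax_weight_le_1[OF that, of d z]
      by (simp add: abs_mult mult_le_one)
  qed
  then have "(\<integral>z. softmax_mean d \<phi> z \<partial>candidates p K)
      = (\<Sum>i<K. \<integral>z. \<phi> (fst (z i)) * softmax_weight d z i \<partial>candidates p K)"
    unfolding softmax_mean_def by (intro Bochner_Integration.integral_sum) auto
  also have "\<dots> = (\<Sum>i<K. \<integral>z. \<phi> (fst (z (K - 1))) * softmax_weight d z (K - 1) \<partial>candidates p K)"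
    using two_le_K by (intro sum.cong refl integral_softmax_weight_swap[OF p d \<phi>_fst]) auto
  also have "\<dots> = (\<integral>x. \<phi> x * selected d p x \<partial>M)"
    by (simp add: integral_mult_selected_eq_last[OF p d \<phi> \<phi>_bound] mult.assoc)
  finally show ?thesis ..
qed

lemma selected_measurable:
  "is_density M p \<Longrightarrow> d \<in> borel_measurable M \<Longrightarrow> selected d p \<in> borel_measurable M"
  unfolding selected_def[abs_def] using H_kernel_measurable
  by (intro borel_measurable_times) (auto simp: is_density_def)

lemma selected_nonneg: "is_density M p \<Longrightarrow> x \<in> space M \<Longrightarrow> 0 \<le> selected d p x"
  unfolding selected_def using H_kernel_nonneg by (auto simp: is_density_def)

lemma integrable_selected:
  assumes p: "is_density M p" and d: "d \<in> borel_measurable M"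
  shows "integrable M (selected d p)"
proof (rule Bochner_Integration.integrable_bound)
  show "integrable M (\<lambda>x. real K * p x)" using p by (simp add: is_density_def)
  have "\<bar>selected d p x\<bar> \<le> real K * p x" if "x \<in> space M" for x
  proof -
    have "0 \<le> p x" using p that by (simp add: is_density_def)
    moreover have "p x * H_kernel K M N r p d x \<le> p x * real K"
      by (rule mult_left_mono[OF H_kernel_le[OF p] \<open>0 \<le> p x\<close>])
    ultimately show ?thesis using H_kernel_nonneg[OF p, of d x] by (simp add: selected_def mult.commute)
  qed
  then show "AE x in M. norm (selected d p x) \<le> norm (real K * p x)"
    using p by (intro AE_I2) (auto simp: is_density_def abs_mult)
qed (rule selected_measurable[OF p d])

lemma integral_selected:
  assumes p: "is_density M p" and d: "d \<in> borel_measurable M"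
  shows "(\<integral>x. selected d p x \<partial>M) = 1"
proof -
  have "softmax_mean d (\<lambda>_. 1) = (\<lambda>_. 1)" by (simp add: fun_eq_iff softmax_mean_def sum_softmax_weight)
  then show ?thesis
    using integral_mult_selected[OF p d, of "\<lambda>_. 1"] prob_space.prob_space[OF prob_space_candidates[OF p]]
    by simp
qed

lemma softmax_mean_perturb_le:
  assumes "\<And>x. \<bar>\<phi> x\<bar> \<le> 1" and d: "\<forall>i<K. \<bar>d (fst (z i))\<bar> \<le> \<eta>"
  shows "softmax_mean d \<phi> z - softmax_mean (\<lambda>_. 0) \<phi> z \<le> real K * \<eta> / 2"
proof -
  have "softmax_mean d \<phi> z - softmax_mean (\<lambda>_. 0) \<phi> z
      = (\<Sum>i<K. \<phi> (fst (z i)) * (softmax_weight d z i - softmax_weight (\<lambda>_. 0) z i))"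
    unfolding softmax_mean_def by (simp add: sum_subtractf[symmetric] right_diff_distrib)
  also have "\<dots> \<le> (\<Sum>i<K. \<bar>softmax_weight d z i - softmax_weight (\<lambda>_. 0) z i\<bar>)"
  proof (rule sum_mono)
    fix i
    let ?\<Delta> = "softmax_weight d z i - softmax_weight (\<lambda>_. 0) z i"
    have "\<phi> (fst (z i)) * ?\<Delta> \<le> \<bar>\<phi> (fst (z i))\<bar> * \<bar>?\<Delta>\<bar>" by (metis abs_ge_self abs_mult)
    also have "\<dots> \<le> \<bar>?\<Delta>\<bar>" using assms(1) by (intro mult_left_le_one_le) auto
    finally show "\<phi> (fst (z i)) * ?\<Delta> \<le> \<bar>?\<Delta>\<bar>" .
  qed
  also have "\<dots> = normalize_L1_dist (\<lambda>i. score d (z i)) (\<lambda>i. score (\<lambda>_. 0) (z i)) {..<K}"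
    unfolding normalize_L1_dist_def softmax_weight_def ..
  also have "\<dots> \<le> real K * \<eta> / 2"
    using d by (intro normalize_L1_dist_le) (auto simp: score_def)
  finally show ?thesis .
qed

lemma AE_candidates_component:
  assumes p: "is_density M p" and ae: "AE x in M. P x"
  shows "AE z in candidates p n. \<forall>i<n. P (fst (z i))"
proof -
  have [measurable]: "p \<in> borel_measurable M" using p by (simp add: is_density_def)
  have "AE x in density M p. P x" using ae by (subst AE_density) (auto elim: eventually_mono)
  then have "AE x in distr (density M p \<Otimes>\<^sub>M N) (density M p) fst. P x"
    unfolding prob_space.distr_pair_fst[OF prob_space_N] .
  then have "AE v in candidate p. P (fst v)"
    unfolding candidate_def by (rule AE_distrD[OF measurable_fst])
  then have "\<forall>i<n. AE z in candidates p n. P (fst (z i))"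
    unfolding candidates_def using prob_space_candidate[OF p] by (auto intro: AE_PiM_component)
  then have "AE z in candidates p n. \<forall>i\<in>{..<n}. P (fst (z i))" by (intro eventually_ball_finite) auto
  then show ?thesis by (rule eventually_mono) simp
qed

lemma integral_abs_selected_diff_le:
  assumes p: "is_density M p" and q: "is_density M q" and d [measurable]: "d \<in> borel_measurable M"
  shows "(\<integral>x. \<bar>selected d p x - selected d q x\<bar> \<partial>M) \<le> real K * (\<integral>x. \<bar>p x - q x\<bar> \<partial>M)"
proof -
  define \<phi> where "\<phi> x = sgn (selected d p x - selected d q x)" for x
  have \<phi> [measurable]: "\<phi> \<in> borel_measurable M"
    unfolding \<phi>_def[abs_def]
    by (rule measurable_compose[OF borel_measurable_diff borel_measurable_sgn])
      (rule selected_measurable[OF p d], rule selected_measurable[OF q d])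
  have \<phi>_bound: "\<bar>\<phi> x\<bar> \<le> 1" for x by (simp add: \<phi>_def abs_sgn_eq)
  have candidate_dist: "\<bar>integral\<^sup>L (candidate p) g - integral\<^sup>L (candidate q) g\<bar> \<le> (\<integral>x. \<bar>p x - q x\<bar> \<partial>M)"
    if g: "g \<in> borel_measurable (candidate p)" and g_bound: "\<And>v. \<bar>g v\<bar> \<le> 1" for g
  proof -
    have "g \<in> borel_measurable (M \<Otimes>\<^sub>M N)"
      using g unfolding measurable_candidate_iff
      by (simp add: measurable_cong_sets[OF sets_pair_measure_cong[OF refl sets_N] refl])
    then show ?thesis
      unfolding candidate_def by (rule abs_integral_density_pair_diff_le[OF p q prob_space_N _ g_bound])
  qed
  have sets_eq: "sets (candidate q) = sets (candidate p)" by (simp add: sets_candidate)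
  have mean: "softmax_mean d \<phi> \<in> borel_measurable (PiM {..<K} (\<lambda>_. candidate p))"
    using softmax_mean_measurable[OF d \<phi>] unfolding candidates_def .
  have "(\<integral>x. \<bar>selected d p x - selected d q x\<bar> \<partial>M)
      = (\<integral>x. \<phi> x * selected d p x \<partial>M) - (\<integral>x. \<phi> x * selected d q x \<partial>M)"
    unfolding \<phi>_def by (rule integral_abs_diff_eq_sgn[OF integrable_selected[OF p d] integrable_selected[OF q d]])
  also have "\<dots> = integral\<^sup>L (candidates p K) (softmax_mean d \<phi>) - integral\<^sup>L (candidates q K) (softmax_mean d \<phi>)"
    by (simp add: integral_mult_selected[OF p d \<phi> \<phi>_bound] integral_mult_selected[OF q d \<phi> \<phi>_bound])
  also have "\<dots> \<le> \<bar>\<dots>\<bar>" by (rule abs_ge_self)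
  also have "\<dots> \<le> real K * (\<integral>x. \<bar>p x - q x\<bar> \<partial>M)"
    unfolding candidates_def
    by (rule abs_integral_PiM_diff_le[OF prob_space_candidate[OF p] prob_space_candidate[OF q] sets_eq
          candidate_dist mean abs_softmax_mean_le[OF \<phi>_bound]])
  finally show ?thesis .
qed

lemma integral_abs_selected_perturb_le:
  assumes p: "is_density M p" and d [measurable]: "d \<in> borel_measurable M"
    and d_bound: "AE x in M. \<bar>d x\<bar> \<le> \<eta>"
  shows "(\<integral>x. \<bar>selected d p x - selected (\<lambda>_. 0) p x\<bar> \<partial>M) \<le> real K * \<eta> / 2"
proof -
  have zero: "(\<lambda>_. 0) \<in> borel_measurable M" by simp
  define \<phi> where "\<phi> x = sgn (selected d p x - selected (\<lambda>_. 0) p x)" for x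
  have \<phi> [measurable]: "\<phi> \<in> borel_measurable M"
    unfolding \<phi>_def[abs_def]
    by (rule measurable_compose[OF borel_measurable_diff borel_measurable_sgn])
      (rule selected_measurable[OF p d], rule selected_measurable[OF p zero])
  have \<phi>_bound: "\<bar>\<phi> x\<bar> \<le> 1" for x by (simp add: \<phi>_def abs_sgn_eq)
  have integrable_mean: "integrable (candidates p K) (softmax_mean d' \<phi>)" if "d' \<in> borel_measurable M" for d'
    using prob_space_candidates[OF p] softmax_mean_measurable[OF that \<phi>] abs_softmax_mean_le[OF \<phi>_bound]
    by (rule integrable_bounded_prob_space)
  have "(\<integral>x. \<bar>selected d p x - selected (\<lambda>_. 0) p x\<bar> \<partial>M)
      = (\<integral>x. \<phi> x * selected d p x \<partial>M) - (\<integral>x. \<phi> x * selected (\<lambda>_. 0) p x \<partial>M)"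
    unfolding \<phi>_def
    by (rule integral_abs_diff_eq_sgn[OF integrable_selected[OF p d] integrable_selected[OF p zero]])
  also have "\<dots> = (\<integral>z. softmax_mean d \<phi> z - softmax_mean (\<lambda>_. 0) \<phi> z \<partial>candidates p K)"
    using integrable_mean[OF d] integrable_mean[OF zero]
    by (simp add: integral_mult_selected[OF p d \<phi> \<phi>_bound] integral_mult_selected[OF p zero \<phi> \<phi>_bound])
  also have "\<dots> \<le> real K * \<eta> / 2"
  proof (rule prob_space.integral_le_const[OF prob_space_candidates[OF p]])
    show "integrable (candidates p K) (\<lambda>z. softmax_mean d \<phi> z - softmax_mean (\<lambda>_. 0) \<phi> z)"
      using integrable_mean[OF d] integrable_mean[OF zero] by simp
    show "AE z in candidates p K. softmax_mean d \<phi> z - softmax_mean (\<lambda>_. 0) \<phi> z \<le> real K * \<eta> / 2"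
      using AE_candidates_component[OF p d_bound]
      by (rule eventually_mono) (rule softmax_mean_perturb_le[OF \<phi>_bound])
  qed
  finally show ?thesis .
qed

lemma T_map_eq: "T_map K M N r \<alpha> p_ref d p = (\<lambda>x. \<alpha> * p_ref x + (1 - \<alpha>) * selected d p x)"
  by (simp add: T_map_def selected_def fun_eq_iff mult.assoc)

lemma is_density_T_map:
  assumes \<alpha>: "0 \<le> \<alpha>" "\<alpha> \<le> 1" and p_ref: "is_density M p_ref" and p: "is_density M p"
    and d: "d \<in> borel_measurable M"
  shows "is_density M (T_map K M N r \<alpha> p_ref d p)"
  using p_ref selected_measurable[OF p d] selected_nonneg[OF p] integrable_selected[OF p d]
    integral_selected[OF p d] \<alpha>
  by (auto simp: is_density_def T_map_eq)

lemma integral_abs_T_map_diff_le: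
  assumes \<alpha>: "\<alpha> \<le> 1" and p: "is_density M p" and q: "is_density M q"
    and d: "d \<in> borel_measurable M" and d_bound: "AE x in M. \<bar>d x\<bar> \<le> \<eta>"
  shows "(\<integral>x. \<bar>T_map K M N r \<alpha> p_ref d p x - T_map K M N r \<alpha> p_ref (\<lambda>_. 0) q x\<bar> \<partial>M)
    \<le> (1 - \<alpha>) * (real K * \<eta> / 2 + real K * (\<integral>x. \<bar>p x - q x\<bar> \<partial>M))"
proof -
  have zero: "(\<lambda>_. 0) \<in> borel_measurable M" by simp
  note integrable = integrable_selected[OF p d] integrable_selected[OF p zero] integrable_selected[OF q zero]
  have "(\<integral>x. \<bar>selected d p x - selected (\<lambda>_. 0) q x\<bar> \<partial>M)
      \<le> (\<integral>x. \<bar>selected d p x - selected (\<lambda>_. 0) p x\<bar> + \<bar>selected (\<lambda>_. 0) p x - selected (\<lambda>_. 0) q x\<bar> \<partial>M)"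
    using integrable by (intro integral_mono) auto
  also have "\<dots> = (\<integral>x. \<bar>selected d p x - selected (\<lambda>_. 0) p x\<bar> \<partial>M)
      + (\<integral>x. \<bar>selected (\<lambda>_. 0) p x - selected (\<lambda>_. 0) q x\<bar> \<partial>M)"
    using integrable by (intro Bochner_Integration.integral_add) auto
  also have "\<dots> \<le> real K * \<eta> / 2 + real K * (\<integral>x. \<bar>p x - q x\<bar> \<partial>M)"
    by (intro add_mono integral_abs_selected_perturb_le[OF p d d_bound]
        integral_abs_selected_diff_le[OF p q zero])
  finally have "(\<integral>x. \<bar>selected d p x - selected (\<lambda>_. 0) q x\<bar> \<partial>M)
      \<le> real K * \<eta> / 2 + real K * (\<integral>x. \<bar>p x - q x\<bar> \<partial>M)" .
  then show ?thesis
    using \<alpha> by (simp add: T_map_eq right_diff_distrib[symmetric] abs_mult mult_left_mono)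
qed

lemma is_density_T_map_iterate:
  assumes "0 \<le> \<alpha>" "\<alpha> \<le> 1" and "is_density M p_ref" "is_density M p0" "d \<in> borel_measurable M"
  shows "is_density M ((T_map K M N r \<alpha> p_ref d ^^ n) p0)"
  by (induction n) (simp_all add: assms is_density_T_map)

lemma integral_abs_T_map_iterate_diff_le:
  assumes \<alpha>: "(real K - 1) / real K < \<alpha>" "\<alpha> < 1" and p_ref: "is_density M p_ref"
    and p0: "is_density M p0" and d: "d \<in> borel_measurable M"
    and d_bound: "AE x in M. \<bar>d x\<bar> \<le> \<eta>" and \<eta>: "0 \<le> \<eta>"
  shows "(\<integral>x. \<bar>(T_map K M N r \<alpha> p_ref d ^^ n) p0 x - (T_map K M N r \<alpha> p_ref (\<lambda>_. 0) ^^ n) p0 x\<bar> \<partial>M)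
    \<le> \<eta> * ((1 - \<alpha>) * real K) / (2 * (1 - (1 - \<alpha>) * real K))"
proof (induction n)
  define \<rho> where "\<rho> = (1 - \<alpha>) * real K"
  have K_pos: "0 < real K" using two_le_K by simp
  have \<rho>_pos: "0 < \<rho>" unfolding \<rho>_def using \<alpha> K_pos by simp
  have "real K - 1 < \<alpha> * real K" using \<alpha>(1) K_pos by (simp add: divide_less_eq)
  then have \<rho>_lt_1: "\<rho> < 1" unfolding \<rho>_def by (simp add: algebra_simps)
  have "0 \<le> (real K - 1) / real K" using two_le_K by simp
  then have \<alpha>01: "0 \<le> \<alpha>" "\<alpha> \<le> 1" using \<alpha> by linarith+
  {
    case 0
    show ?case using \<rho>_pos \<rho>_lt_1 \<eta> by (simp flip: \<rho>_def)
  next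
    case (Suc n)
    let ?A = "\<eta> * \<rho> / (2 * (1 - \<rho>))"
    have zero: "(\<lambda>_. 0) \<in> borel_measurable M" by simp
    have "(\<integral>x. \<bar>(T_map K M N r \<alpha> p_ref d ^^ Suc n) p0 x - (T_map K M N r \<alpha> p_ref (\<lambda>_. 0) ^^ Suc n) p0 x\<bar> \<partial>M)
        \<le> (1 - \<alpha>) * (real K * \<eta> / 2 + real K *
          (\<integral>x. \<bar>(T_map K M N r \<alpha> p_ref d ^^ n) p0 x - (T_map K M N r \<alpha> p_ref (\<lambda>_. 0) ^^ n) p0 x\<bar> \<partial>M))"
      unfolding funpow.simps comp_def
      by (rule integral_abs_T_map_diff_le[OF \<alpha>01(2) is_density_T_map_iterate[OF \<alpha>01 p_ref p0 d]
            is_density_T_map_iterate[OF \<alpha>01 p_ref p0 zero] d d_bound])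
    also have "\<dots> \<le> (1 - \<alpha>) * (real K * \<eta> / 2 + real K * ?A)"
      using Suc.IH \<alpha>01 by (intro mult_left_mono add_left_mono) (simp_all add: \<rho>_def)
    also have "\<dots> = \<rho> * \<eta> / 2 + \<rho> * ?A" unfolding \<rho>_def by (simp add: algebra_simps)
    also have "\<dots> = ?A" using \<rho>_lt_1 by (simp add: field_simps)
    finally show ?case by (simp add: \<rho>_def)
  }
qed

end

lemma d_TV_commute: "d_TV M p q = d_TV M q p"
  by (simp add: d_TV_def abs_minus_commute)

lemma d_TV_triangle:
  assumes "integrable M p" "integrable M q" "integrable M s"
  shows "d_TV M p s \<le> d_TV M p q + d_TV M q s"
proof -
  have "(\<integral>x. \<bar>p x - s x\<bar> \<partial>M) \<le> (\<integral>x. \<bar>p x - q x\<bar> + \<bar>q x - s x\<bar> \<partial>M)"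
    using assms by (intro integral_mono) auto
  also have "\<dots> = (\<integral>x. \<bar>p x - q x\<bar> \<partial>M) + (\<integral>x. \<bar>q x - s x\<bar> \<partial>M)"
    using assms by (intro Bochner_Integration.integral_add) auto
  finally show ?thesis by (simp add: d_TV_def)
qed

lemma d_TV_le_of_tendsto:
  assumes a: "\<And>n. integrable M (a n)" and b: "\<And>n. integrable M (b n)"
    and L: "integrable M L" and L0: "integrable M L0"
    and ab: "\<And>n. d_TV M (a n) (b n) \<le> B"
    and aL: "(\<lambda>n. d_TV M (a n) L) \<longlonglongrightarrow> 0" and bL0: "(\<lambda>n. d_TV M (b n) L0) \<longlonglongrightarrow> 0"
  shows "d_TV M L L0 \<le> B"
proof (rule tendsto_le[OF trivial_limit_sequentially _ tendsto_const])
  show "(\<lambda>n. d_TV M (a n) L + B + d_TV M (b n) L0) \<longlonglongrightarrow> B"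
    using tendsto_add[OF tendsto_add[OF aL tendsto_const] bL0] by simp
  show "\<forall>\<^sub>F n in sequentially. d_TV M L L0 \<le> d_TV M (a n) L + B + d_TV M (b n) L0"
  proof (intro always_eventually allI)
    fix n
    have "d_TV M L L0 \<le> d_TV M L (a n) + d_TV M (a n) (b n) + d_TV M (b n) L0"
      using d_TV_triangle[OF L a b, of n n] d_TV_triangle[OF L b L0, of n] by simp
    then show "d_TV M L L0 \<le> d_TV M (a n) L + B + d_TV M (b n) L0"
      using ab[of n] by (simp add: d_TV_commute[of M L])
  qed
qed

theorem theorem8:
  fixes M :: "'a measure" and N :: "real measure"
    and r p0 p_ref :: "'a \<Rightarrow> real" and K :: nat and \<alpha> \<eta> :: real
  assumes sf: "sigma_finite_measure M"
    and r_meas: "r \<in> borel_measurable M"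
    and noise: "prob_space N" "sets N = sets borel"
    and K: "2 \<le> K"
    and \<alpha>: "(real K - 1) / real K < \<alpha>" "\<alpha> < 1"
    and p0: "is_density M p0" "integrable M (\<lambda>x. p0 x * \<bar>ln (p0 x)\<bar>)"
    and pref: "is_density M p_ref" "integrable M (\<lambda>x. p_ref x * \<bar>ln (p_ref x)\<bar>)"
    and \<eta>: "\<eta> > 0"
  shows "\<forall>dr. dr \<in> borel_measurable M \<and> (AE x in M. \<bar>dr x\<bar> \<le> \<eta>) \<longrightarrow>
           (\<forall>n. d_TV M ((T_map K M N r \<alpha> p_ref dr ^^ n) p0)
                        ((T_map K M N r \<alpha> p_ref (\<lambda>_. 0) ^^ n) p0)
                 \<le> \<eta> * ((1 - \<alpha>) * real K) / (4 * (1 - (1 - \<alpha>) * real K)))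
         \<and> (\<forall>L L0. is_density M L \<and> is_density M L0
              \<and> (\<lambda>n. d_TV M ((T_map K M N r \<alpha> p_ref dr ^^ n) p0) L) \<longlonglongrightarrow> 0
              \<and> (\<lambda>n. d_TV M ((T_map K M N r \<alpha> p_ref (\<lambda>_. 0) ^^ n) p0) L0) \<longlonglongrightarrow> 0
              \<longrightarrow> d_TV M L L0 \<le> \<eta> * ((1 - \<alpha>) * real K) / (4 * (1 - (1 - \<alpha>) * real K)))"
proof -
  interpret softmax_selection M N r K using noise r_meas K by (simp add: softmax_selection_def)
  let ?B = "\<eta> * ((1 - \<alpha>) * real K) / (4 * (1 - (1 - \<alpha>) * real K))"
  have "0 \<le> (real K - 1) / real K" using K by simp
  then have \<alpha>01: "0 \<le> \<alpha>" "\<alpha> \<le> 1" using \<alpha> by linarith+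
  have zero: "(\<lambda>_. 0) \<in> borel_measurable M" by simp
  show ?thesis
  proof (intro allI impI conjI)
    fix dr assume "dr \<in> borel_measurable M \<and> (AE x in M. \<bar>dr x\<bar> \<le> \<eta>)"
    then have dr: "dr \<in> borel_measurable M" and dr_bound: "AE x in M. \<bar>dr x\<bar> \<le> \<eta>" by auto
    let ?p = "\<lambda>n. (T_map K M N r \<alpha> p_ref dr ^^ n) p0"
    let ?q = "\<lambda>n. (T_map K M N r \<alpha> p_ref (\<lambda>_. 0) ^^ n) p0"
    have "(\<integral>x. \<bar>?p n x - ?q n x\<bar> \<partial>M) / 2
        \<le> \<eta> * ((1 - \<alpha>) * real K) / (2 * (1 - (1 - \<alpha>) * real K)) / 2" for n
      by (intro divide_right_mono integral_abs_T_map_iterate_diff_le[OF \<alpha> pref(1) p0(1) dr dr_bound])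
        (use \<eta> in auto)
    then show TV: "d_TV M (?p n) (?q n) \<le> ?B" for n
      unfolding d_TV_def by (simp add: mult.commute)
    fix L L0 assume "is_density M L \<and> is_density M L0
      \<and> (\<lambda>n. d_TV M (?p n) L) \<longlonglongrightarrow> 0 \<and> (\<lambda>n. d_TV M (?q n) L0) \<longlonglongrightarrow> 0"
    then show "d_TV M L L0 \<le> ?B"
      using is_density_T_map_iterate[OF \<alpha>01 pref(1) p0(1) dr]
        is_density_T_map_iterate[OF \<alpha>01 pref(1) p0(1) zero]
      by (intro d_TV_le_of_tendsto[where a="?p" and b="?q", OF _ _ _ _ TV]) (simp_all add: is_density_def)
  qed
qed

end
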